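(* Let $X$ be a connected weighted bipartite graph and let $u$ be a vertex of $X$ such that $0\notin\Phi_{\mathbf e_u}$. Then $u$ is not sedentary, i.e. $\inf_{t>0}|U(t)_{u,u}|=0$.
   Context: All graphs are simple, loopless, connected and undirected, with nonzero real edge weights; $A=A(X)$ is the weighted adjacency matrix ($A_{u,v}=\omega_{u,v}$, the weight of edge $\{u,v\}$, and $0$ for non-adjacent pairs). Write the spectral decomposition $A=\sum_{\lambda}\lambda E_\lambda$ over the distinct eigenvalues $\lambda$ of $A$, where $E_\lambda$ is the orthogonal projection onto the $\lambda$-eigenspace. The transition matrix is $U(t)=e^{itA}$, $t\in\mathbb R$. The eigenvalue support of $u$ is $\Phi_{\mathbf e_u}=\{\lambda: E_\lambda\mathbf e_u\neq 0\}$. A vertex $u$ is sedentary if $\inf_{t>0}|U(t)_{u,u}|\ge C$ for some constant $0<C\le 1$, and not sedentary if $\inf_{t>0}|U(t)_{u,u}|=0$. *)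

theory Defs
  imports "HOL-Analysis.Analysis"
begin

text \<open>A weighted graph on the finite vertex type 'n is given by a weight function w:
  w u v \<noteq> 0 iff {u,v} is an edge (with weight w u v). Simple, loopless, undirected.\<close>

definition weighted_graph :: "('n::finite \<Rightarrow> 'n \<Rightarrow> real) \<Rightarrow> bool" where
  "weighted_graph w \<longleftrightarrow> (\<forall>u v. w u v = w v u) \<and> (\<forall>u. w u u = 0)"

definition wg_connected :: "('n::finite \<Rightarrow> 'n \<Rightarrow> real) \<Rightarrow> bool" where
  "wg_connected w \<longleftrightarrow> (\<forall>u v. (u, v) \<in> {(x, y). w x y \<noteq> 0}\<^sup>*)"

definition wg_bipartite :: "('n::finite \<Rightarrow> 'n \<Rightarrow> real) \<Rightarrow> bool" where
  "wg_bipartite w \<longleftrightarrow> (\<exists>S. \<forall>x y. w x y \<noteq> 0 \<longrightarrow> (x \<in> S \<longleftrightarrow> y \<notin> S))"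

definition adj_matrix :: "('n::finite \<Rightarrow> 'n \<Rightarrow> real) \<Rightarrow> real^'n^'n" where
  "adj_matrix w = (\<chi> i j. w i j)"

definition eigenspace :: "real^'n^'n \<Rightarrow> real \<Rightarrow> (real^'n) set" where
  "eigenspace A c = {v. A *v v = c *\<^sub>R v}"

definition eig_proj :: "real^'n^'n \<Rightarrow> real \<Rightarrow> real^'n \<Rightarrow> real^'n" where
  "eig_proj A c x = closest_point (eigenspace A c) x"

definition eig_support :: "real^'n^'n \<Rightarrow> 'n::finite \<Rightarrow> real set" where
  "eig_support A u = {c. eig_proj A c (axis u 1) \<noteq> 0}"

fun matpow :: "'a::semiring_1^'n::finite^'n \<Rightarrow> nat \<Rightarrow> 'a^'n^'n" where
  "matpow M 0 = mat 1"
| "matpow M (Suc k) = M ** matpow M k"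

definition mexp :: "complex^'n::finite^'n \<Rightarrow> complex^'n^'n" where
  "mexp M = (\<Sum>k. (1 / fact k) *\<^sub>R matpow M k)"

definition transition :: "real^'n::finite^'n \<Rightarrow> real \<Rightarrow> complex^'n^'n" where
  "transition A t = mexp (\<chi> i j. \<i> * complex_of_real t * complex_of_real (A $ i $ j))"

end

(* Bipartiteness makes odd powers of A vanish on the diagonal, so U(t)_uu = cos(tA)_uu is real.
   Since 0 is not in the eigenvalue support of u, e_u = A y for some y. The function
   h(t) = <y, cos(tA) y> satisfies h'' = -cos(tA)_uu and h'(0) = 0, and it is bounded by |y|^2
   because |cos(tA) y|^2 + |sin(tA) y|^2 is conserved for symmetric A. If cos(tA)_uu, which is 1
   at t = 0, had no positive zero, it would stay positive, h' would be eventually below a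
   negative constant and h would be unbounded. *)

theory Submission
  imports Defs
begin

lemma closest_point_subspace_eq_0_imp_orthogonal:
  fixes S :: "'a::euclidean_space set"
  assumes S: "subspace S" and cp: "closest_point S e = 0"
  shows "e \<in> S\<^sup>\<bottom>"
  unfolding orthogonal_comp_def orthogonal_def
proof (intro CollectI ballI)
  fix x assume x: "x \<in> S"
  note dot = closest_point_dot[OF subspace_imp_convex[OF S] closed_subspace[OF S], of _ e]
  have "- x \<in> S" using x subspace_neg[OF S] by blast
  then have "e \<bullet> x \<le> 0" "e \<bullet> (- x) \<le> 0"
    using dot[OF x] dot[OF \<open>- x \<in> S\<close>] cp by simp_all
  then show "x \<bullet> e = 0" by (simp add: inner_commute)
qed

lemma in_range_if_closest_point_kernel_eq_0:
  fixes A :: "real^'n^'n"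
  assumes sym: "transpose A = A" and cp: "closest_point {v. A *v v = 0} e = 0"
  shows "\<exists>y. A *v y = e"
proof -
  have "e \<in> {v. A *v v = 0}\<^sup>\<bottom>"
    by (rule closest_point_subspace_eq_0_imp_orthogonal[OF
          linear_subspace_kernel[OF matrix_vector_mul_linear] cp])
  moreover have "{v. A *v v = 0} = (range ((*v) A))\<^sup>\<bottom>"
    using ker_orthogonal_comp_adjoint[OF matrix_vector_mul_linear, of A]
    by (simp add: adjoint_matrix sym vimage_def)
  moreover have "(range ((*v) A))\<^sup>\<bottom>\<^sup>\<bottom> = range ((*v) A)"
    by (rule orthogonal_comp_self[OF linear_subspace_image[OF matrix_vector_mul_linear subspace_UNIV]])
  ultimately show ?thesis by auto
qed

lemma matpow_commute: "matpow A n ** A = A ** matpow A n"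
  by (induction n) (simp_all add: matrix_mul_assoc[symmetric])

lemma matpow_scaled_of_real_entry:
  fixes A :: "real^'n::finite^'n"
  shows "matpow (\<chi> i j. c * complex_of_real (A $ i $ j)) k $ i $ j
           = c ^ k * of_real (matpow A k $ i $ j)"
proof (induction k arbitrary: i j)
  case 0
  then show ?case by (simp add: mat_def)
next
  case (Suc k)
  have "matpow (\<chi> i j. c * complex_of_real (A $ i $ j)) (Suc k) $ i $ j
      = (\<Sum>l\<in>UNIV. (c * of_real (A $ i $ l)) * (c ^ k * of_real (matpow A k $ l $ j)))"
    by (simp add: matrix_matrix_mult_def Suc.IH)
  also have "\<dots> = c ^ Suc k * of_real (\<Sum>l\<in>UNIV. A $ i $ l * matpow A k $ l $ j)"
    by (simp add: sum_distrib_left algebra_simps)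
  finally show ?case by (simp add: matrix_matrix_mult_def)
qed

lemma abs_matpow_entry_le:
  fixes A :: "real^'n::finite^'n"
  shows "\<bar>matpow A k $ i $ j\<bar> \<le> (\<Sum>a\<in>UNIV. \<Sum>b\<in>UNIV. \<bar>A $ a $ b\<bar>) ^ k"
proof (induction k arbitrary: i j)
  case 0
  then show ?case by (simp add: mat_def)
next
  case (Suc k)
  define B where "B = (\<Sum>a\<in>UNIV. \<Sum>b\<in>UNIV. \<bar>A $ a $ b\<bar>)"
  have "\<bar>matpow A (Suc k) $ i $ j\<bar> = \<bar>\<Sum>l\<in>UNIV. A $ i $ l * matpow A k $ l $ j\<bar>"
    by (simp add: matrix_matrix_mult_def)
  also have "\<dots> \<le> (\<Sum>l\<in>UNIV. \<bar>A $ i $ l\<bar> * B ^ k)"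
    by (rule order_trans[OF sum_abs])
       (auto intro!: sum_mono mult_left_mono Suc.IH simp: abs_mult B_def)
  also have "\<dots> = (\<Sum>l\<in>UNIV. \<bar>A $ i $ l\<bar>) * B ^ k"
    by (simp add: sum_distrib_right)
  also have "\<dots> \<le> B * B ^ k"
    unfolding B_def
    by (rule mult_right_mono)
       (auto intro!: member_le_sum[where f = "\<lambda>a. \<Sum>b\<in>UNIV. \<bar>A $ a $ b\<bar>"] sum_nonneg
             zero_le_power)
  finally show ?case by (simp add: B_def)
qed

lemma matpow_entry_nonzero_imp_parity:
  fixes A :: "real^'n::finite^'n"
  assumes bipartite: "\<And>x y. A $ x $ y \<noteq> 0 \<Longrightarrow> (x \<in> S \<longleftrightarrow> y \<notin> S)"
    and "matpow A k $ i $ j \<noteq> 0"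
  shows "(i \<in> S \<longleftrightarrow> j \<in> S) \<longleftrightarrow> even k"
  using assms(2)
proof (induction k arbitrary: i j)
  case 0
  then show ?case by (auto simp: mat_def split: if_splits)
next
  case (Suc k)
  then have "(\<Sum>l\<in>UNIV. A $ i $ l * matpow A k $ l $ j) \<noteq> 0"
    by (simp add: matrix_matrix_mult_def)
  then obtain l where "A $ i $ l \<noteq> 0" "matpow A k $ l $ j \<noteq> 0"
    by (metis (no_types, lifting) mult_zero_left mult_zero_right sum.neutral)
  with bipartite Suc.IH show ?case by fastforce
qed

lemma matpow_odd_diagonal_eq_0:
  fixes A :: "real^'n::finite^'n"
  assumes "\<And>x y. A $ x $ y \<noteq> 0 \<Longrightarrow> (x \<in> S \<longleftrightarrow> y \<notin> S)" and "odd k"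
  shows "matpow A k $ i $ i = 0"
  using matpow_entry_nonzero_imp_parity[OF assms(1)] assms(2) by blast

lemma sums_matrixI:
  fixes f :: "nat \<Rightarrow> 'a::real_normed_vector^'n::finite^'m::finite"
  assumes "\<And>i j. (\<lambda>k. f k $ i $ j) sums a i j"
  shows "f sums (\<chi> i j. a i j)"
  unfolding sums_def
proof (intro vec_tendstoI)
  fix i j
  show "((\<lambda>n. (\<Sum>k<n. f k) $ i $ j) \<longlongrightarrow> (\<chi> i j. a i j) $ i $ j) sequentially"
    using assms[of i j] by (simp add: sums_def)
qed

definition matpow_series :: "(nat \<Rightarrow> real) \<Rightarrow> real^'n::finite^'n \<Rightarrow> real \<Rightarrow> real^'n^'n" where
  "matpow_series c A t = (\<chi> i j. \<Sum>k. c k * matpow A k $ i $ j * t ^ k)"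

lemma summable_matpow_series_entry:
  fixes A :: "real^'n::finite^'n"
  assumes c: "\<And>k. \<bar>c k\<bar> \<le> inverse (fact k)"
  shows "summable (\<lambda>k. c k * matpow A k $ i $ j * t ^ k)"
proof (rule summable_comparison_test')
  define B where "B = (\<Sum>a\<in>UNIV. \<Sum>b\<in>UNIV. \<bar>A $ a $ b\<bar>)"
  show "summable (\<lambda>k. inverse (fact k) * (B * \<bar>t\<bar>) ^ k)"
    by (rule summable_exp)
  show "norm (c k * matpow A k $ i $ j * t ^ k) \<le> inverse (fact k) * (B * \<bar>t\<bar>) ^ k" for k
  proof -
    have "norm (c k * matpow A k $ i $ j * t ^ k)
        = \<bar>c k\<bar> * \<bar>matpow A k $ i $ j\<bar> * \<bar>t\<bar> ^ k"
      by (simp add: abs_mult power_abs)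
    also have "\<dots> \<le> inverse (fact k) * B ^ k * \<bar>t\<bar> ^ k"
      unfolding B_def
      by (intro mult_mono c abs_matpow_entry_le)
         (auto intro!: mult_nonneg_nonneg zero_le_power sum_nonneg)
    finally show ?thesis by (simp add: power_mult_distrib)
  qed
qed

lemma matpow_series_mult_left_entry:
  fixes A :: "real^'n::finite^'n"
  assumes "\<And>k. \<bar>c k\<bar> \<le> inverse (fact k)"
  shows "(M ** matpow_series c A t) $ i $ j = (\<Sum>k. c k * (M ** matpow A k) $ i $ j * t ^ k)"
proof -
  note summable = summable_matpow_series_entry[OF assms]
  have "(M ** matpow_series c A t) $ i $ j
      = (\<Sum>l\<in>UNIV. \<Sum>k. M $ i $ l * (c k * matpow A k $ l $ j * t ^ k))"
    by (simp add: matrix_matrix_mult_def matpow_series_def suminf_mult summable)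
  also have "\<dots> = (\<Sum>k. \<Sum>l\<in>UNIV. M $ i $ l * (c k * matpow A k $ l $ j * t ^ k))"
    by (rule suminf_sum[symmetric]) (intro summable_mult summable)
  also have "\<dots> = (\<Sum>k. c k * (M ** matpow A k) $ i $ j * t ^ k)"
    by (simp add: matrix_matrix_mult_def sum_distrib_left sum_distrib_right algebra_simps)
  finally show ?thesis .
qed

lemma matpow_series_mult_right_entry:
  fixes A :: "real^'n::finite^'n"
  assumes "\<And>k. \<bar>c k\<bar> \<le> inverse (fact k)"
  shows "(matpow_series c A t ** M) $ i $ j = (\<Sum>k. c k * (matpow A k ** M) $ i $ j * t ^ k)"
proof -
  note summable = summable_matpow_series_entry[OF assms]
  have "(matpow_series c A t ** M) $ i $ j
      = (\<Sum>l\<in>UNIV. \<Sum>k. c k * matpow A k $ i $ l * t ^ k * M $ l $ j)"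
    by (simp add: matrix_matrix_mult_def matpow_series_def suminf_mult2 summable)
  also have "\<dots> = (\<Sum>k. \<Sum>l\<in>UNIV. c k * matpow A k $ i $ l * t ^ k * M $ l $ j)"
    by (rule suminf_sum[symmetric]) (intro summable_mult2 summable)
  also have "\<dots> = (\<Sum>k. c k * (matpow A k ** M) $ i $ j * t ^ k)"
    by (simp add: matrix_matrix_mult_def sum_distrib_left sum_distrib_right algebra_simps)
  finally show ?thesis .
qed

lemma matpow_series_commute:
  fixes A :: "real^'n::finite^'n"
  assumes "\<And>k. \<bar>c k\<bar> \<le> inverse (fact k)"
  shows "A ** matpow_series c A t = matpow_series c A t ** A"
  by (simp add: vec_eq_iff matpow_series_mult_left_entry matpow_series_mult_right_entry
      assms matpow_commute)

lemma matpow_series_uminus: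
  fixes A :: "real^'n::finite^'n"
  assumes "\<And>k. \<bar>c k\<bar> \<le> inverse (fact k)"
  shows "matpow_series (\<lambda>k. - c k) A t = - matpow_series c A t"
  by (simp add: vec_eq_iff matpow_series_def suminf_minus summable_matpow_series_entry assms)

lemma matpow_series_at_0: "matpow_series c A 0 = c 0 *\<^sub>R mat 1"
  using powser_zero[of "\<lambda>k. c k * matpow A k $ _ $ _"]
  by (simp add: vec_eq_iff matpow_series_def mat_def)

lemma matpow_series_entry_has_derivative:
  fixes A :: "real^'n::finite^'n"
  assumes c: "\<And>k. \<bar>c k\<bar> \<le> inverse (fact k)"
    and dc: "\<And>k. \<bar>diffs c k\<bar> \<le> inverse (fact k)"
  shows "((\<lambda>t. matpow_series c A t $ i $ j)
           has_real_derivative (A ** matpow_series (diffs c) A t) $ i $ j) (at t)"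
proof -
  have "((\<lambda>t. \<Sum>k. c k * matpow A k $ i $ j * t ^ k) has_real_derivative
          (\<Sum>k. diffs (\<lambda>k. c k * matpow A k $ i $ j) k * t ^ k)) (at t)"
    by (rule termdiffs_strong_converges_everywhere[OF summable_matpow_series_entry[OF c]])
  moreover have "diffs (\<lambda>k. c k * matpow A k $ i $ j) k = diffs c k * (A ** matpow A k) $ i $ j"
    for k
    by (simp add: diffs_def)
  ultimately have "((\<lambda>t. \<Sum>k. c k * matpow A k $ i $ j * t ^ k) has_real_derivative
               (\<Sum>k. diffs c k * (A ** matpow A k) $ i $ j * t ^ k)) (at t)"
    by simp
  then show ?thesis
    unfolding matpow_series_mult_left_entry[OF dc] by (simp add: matpow_series_def)
qed

abbreviation mat_cos :: "real^'n::finite^'n \<Rightarrow> real \<Rightarrow> real^'n^'n" where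
  "mat_cos \<equiv> matpow_series cos_coeff"

abbreviation mat_sin :: "real^'n::finite^'n \<Rightarrow> real \<Rightarrow> real^'n^'n" where
  "mat_sin \<equiv> matpow_series sin_coeff"

lemma abs_cos_coeff_le: "\<bar>cos_coeff k\<bar> \<le> inverse (fact k)"
  by (simp add: cos_coeff_def inverse_eq_divide)

lemma abs_sin_coeff_le: "\<bar>sin_coeff k\<bar> \<le> inverse (fact k)"
  by (simp add: sin_coeff_def inverse_eq_divide)

lemma mat_cos_entry_has_derivative:
  "((\<lambda>t. mat_cos A t $ i $ j) has_real_derivative - (A ** mat_sin A t) $ i $ j) (at t)"
proof -
  have diffs_le: "\<bar>diffs cos_coeff k\<bar> \<le> inverse (fact k)" for k
    by (simp add: diffs_cos_coeff abs_sin_coeff_le)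
  have "(A ** matpow_series (diffs cos_coeff) A t) $ i $ j = - (A ** mat_sin A t) $ i $ j"
    by (simp add: diffs_cos_coeff matpow_series_uminus abs_sin_coeff_le
        matrix_matrix_mult_def sum_negf)
  with matpow_series_entry_has_derivative[OF abs_cos_coeff_le diffs_le] show ?thesis
    by metis
qed

lemma mat_sin_entry_has_derivative:
  "((\<lambda>t. mat_sin A t $ i $ j) has_real_derivative (A ** mat_cos A t) $ i $ j) (at t)"
  using matpow_series_entry_has_derivative[of sin_coeff, OF abs_sin_coeff_le]
  by (simp add: diffs_sin_coeff abs_cos_coeff_le)

lemma mat_cos_at_0: "mat_cos A 0 = mat 1"
  by (simp add: matpow_series_at_0)

lemma mat_sin_at_0: "mat_sin A 0 = 0"
  by (simp add: matpow_series_at_0)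

lemma ii_mult_power_div_fact:
  "(\<i> * complex_of_real t) ^ k / fact k = Complex (cos_coeff k * t ^ k) (sin_coeff k * t ^ k)"
proof -
  have "(\<i> * complex_of_real t) ^ k / fact k = \<i> ^ k * complex_of_real (t ^ k / fact k)"
    by (simp add: power_mult_distrib)
  moreover obtain m where "k = 2 * m \<or> k = Suc (2 * m)"
    by (metis oddE evenE add.commute plus_1_eq_Suc)
  ultimately show ?thesis
    by (auto simp: cos_coeff_def sin_coeff_def power_mult Complex_eq simp del: fact_Suc)
qed

lemma transition_entry:
  "transition A t $ i $ j = Complex (mat_cos A t $ i $ j) (mat_sin A t $ i $ j)"
proof -
  define M where "M = (\<chi> i j. \<i> * complex_of_real t * complex_of_real (A $ i $ j))"
  have "(\<lambda>k. ((1 / fact k) *\<^sub>R matpow M k) $ i $ j)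
          sums Complex (mat_cos A t $ i $ j) (mat_sin A t $ i $ j)" for i j
  proof -
    have "((1 / fact k) *\<^sub>R matpow M k) $ i $ j
        = Complex (cos_coeff k * matpow A k $ i $ j * t ^ k) (sin_coeff k * matpow A k $ i $ j * t ^ k)"
      for k
    proof -
      have "((1 / fact k) *\<^sub>R matpow M k) $ i $ j
          = (\<i> * complex_of_real t) ^ k / fact k * complex_of_real (matpow A k $ i $ j)"
        by (simp add: M_def matpow_scaled_of_real_entry) (simp add: scaleR_conv_of_real)
      then show ?thesis
        by (simp add: ii_mult_power_div_fact complex_eq_iff)
    qed
    then show ?thesis
      unfolding sums_complex_iff
      by (simp add: matpow_series_def summable_sums summable_matpow_series_entry
          abs_cos_coeff_le abs_sin_coeff_le)
  qed
  then have "(\<lambda>k. (1 / fact k) *\<^sub>R matpow M k)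
               sums (\<chi> i j. Complex (mat_cos A t $ i $ j) (mat_sin A t $ i $ j))"
    by (rule sums_matrixI)
  then show ?thesis
    by (simp add: transition_def mexp_def M_def sums_iff)
qed

lemma transition_diagonal_of_bipartite:
  assumes "\<And>x y. A $ x $ y \<noteq> 0 \<Longrightarrow> (x \<in> S \<longleftrightarrow> y \<notin> S)"
  shows "transition A t $ u $ u = complex_of_real (mat_cos A t $ u $ u)"
proof -
  have "sin_coeff k * matpow A k $ u $ u * t ^ k = 0" for k
    using matpow_odd_diagonal_eq_0[OF assms] by (cases "even k") (auto simp: sin_coeff_def)
  then have "mat_sin A t $ u $ u = 0"
    by (simp only: matpow_series_def vec_lambda_beta suminf_zero)
  then show ?thesis
    by (simp add: transition_entry Complex_eq)
qed

lemma has_real_derivative_matrix_vector_component: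
  fixes M :: "real \<Rightarrow> real^'n::finite^'m::finite"
  assumes "\<And>i j. ((\<lambda>t. M t $ i $ j) has_real_derivative M' $ i $ j) (at t)"
  shows "((\<lambda>t. (M t *v y) $ i) has_real_derivative (M' *v y) $ i) (at t)"
  unfolding matrix_vector_mult_def vec_lambda_beta
  by (intro DERIV_sum DERIV_cmult_right assms)

lemma has_real_derivative_inner_vec:
  fixes f g :: "real \<Rightarrow> real^'n::finite"
  assumes "\<And>i. ((\<lambda>t. f t $ i) has_real_derivative f' $ i) (at t)"
    and "\<And>i. ((\<lambda>t. g t $ i) has_real_derivative g' $ i) (at t)"
  shows "((\<lambda>t. f t \<bullet> g t) has_real_derivative f' \<bullet> g t + f t \<bullet> g') (at t)"
proof -
  have "((\<lambda>t. \<Sum>i\<in>UNIV. f t $ i * g t $ i) has_real_derivative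
          (\<Sum>i\<in>UNIV. f' $ i * g t $ i + g' $ i * f t $ i)) (at t)"
    by (intro DERIV_sum DERIV_mult assms)
  then show ?thesis
    by (simp add: inner_vec_def sum.distrib mult.commute)
qed

lemma symmetric_matrix_inner_commute:
  fixes A :: "real^'n::finite^'n"
  assumes "transpose A = A"
  shows "(A *v x) \<bullet> y = x \<bullet> (A *v y)"
  using dot_lmul_matrix[of x A y] transpose_matrix_vector[of A x] assms by simp

lemma mat_cos_vector_has_derivative:
  "((\<lambda>t. (mat_cos A t *v y) $ i) has_real_derivative (- (A *v (mat_sin A t *v y))) $ i) (at t)"
proof -
  have "((\<lambda>t. (mat_cos A t *v y) $ i) has_real_derivative ((- (A ** mat_sin A t)) *v y) $ i) (at t)"
    by (rule has_real_derivative_matrix_vector_component) (simp add: mat_cos_entry_has_derivative)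
  moreover have "(- (A ** mat_sin A t)) *v y = - ((A ** mat_sin A t) *v y)"
    by (simp add: vec_eq_iff matrix_vector_mult_def sum_negf)
  ultimately show ?thesis
    by (simp add: matrix_vector_mul_assoc)
qed

lemma mat_sin_vector_has_derivative:
  "((\<lambda>t. (mat_sin A t *v y) $ i) has_real_derivative (A *v (mat_cos A t *v y)) $ i) (at t)"
  using has_real_derivative_matrix_vector_component[OF mat_sin_entry_has_derivative]
  by (simp add: matrix_vector_mul_assoc)

lemma mat_cos_sin_norm_conservation:
  fixes A :: "real^'n::finite^'n"
  assumes sym: "transpose A = A"
  shows "norm (mat_cos A t *v y) ^ 2 + norm (mat_sin A t *v y) ^ 2 = norm y ^ 2"
proof -
  define E where
    "E t = (mat_cos A t *v y) \<bullet> (mat_cos A t *v y) + (mat_sin A t *v y) \<bullet> (mat_sin A t *v y)"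
    for t
  have "(E has_real_derivative 0) (at s)" for s
  proof -
    let ?C = "mat_cos A s *v y" and ?S = "mat_sin A s *v y"
    have "(E has_real_derivative
            (- (A *v ?S) \<bullet> ?C + ?C \<bullet> - (A *v ?S)) + ((A *v ?C) \<bullet> ?S + ?S \<bullet> (A *v ?C))) (at s)"
      unfolding E_def
      by (intro DERIV_add has_real_derivative_inner_vec
          mat_cos_vector_has_derivative mat_sin_vector_has_derivative)
    moreover have "(A *v ?S) \<bullet> ?C = (A *v ?C) \<bullet> ?S"
      by (simp only: symmetric_matrix_inner_commute[OF sym] inner_commute[of ?S])
    ultimately show ?thesis
      by (simp add: inner_commute)
  qed
  then have "E t = E 0"
    by (intro DERIV_isconst_all) auto
  then show ?thesis
    by (simp add: E_def power2_norm_eq_inner mat_cos_at_0 mat_sin_at_0)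
qed

lemma norm_mat_cos_vector_le:
  fixes A :: "real^'n::finite^'n"
  assumes "transpose A = A"
  shows "norm (mat_cos A t *v y) \<le> norm y"
proof (rule power2_le_imp_le)
  show "norm (mat_cos A t *v y) ^ 2 \<le> norm y ^ 2"
    using mat_cos_sin_norm_conservation[OF assms, of t y]
      zero_le_power2[of "norm (mat_sin A t *v y)"]
    by linarith
qed simp

lemma negative_second_derivative_unbounded_below:
  fixes h h' f :: "real \<Rightarrow> real"
  assumes h: "\<And>t. (h has_real_derivative h' t) (at t)"
    and h': "\<And>t. (h' has_real_derivative - f t) (at t)"
    and "h' 0 \<le> 0" and f_pos: "\<And>t. t > 0 \<Longrightarrow> f t > 0"
  shows "\<exists>t>0. h t < c"
proof -
  obtain z where "0 < z" "h' 1 - h' 0 = - f z"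
    using MVT2[of 0 1 h' "\<lambda>t. - f t"] h' by auto
  then have "h' 1 < 0"
    using f_pos[of z] \<open>h' 0 \<le> 0\<close> by simp
  define \<delta> where "\<delta> = - h' 1"
  have "\<delta> > 0"
    using \<open>h' 1 < 0\<close> by (simp add: \<delta>_def)
  have h'_le: "h' s \<le> - \<delta>" if "1 \<le> s" for s
  proof -
    have "h' s \<le> h' 1"
      by (rule DERIV_nonpos_imp_nonincreasing[OF that])
         (use h' f_pos in \<open>fastforce intro!: exI[of _ "- f _"] less_imp_le\<close>)
    then show ?thesis by (simp add: \<delta>_def)
  qed
  define T where "T = 1 + (max 0 (h 1 - c) + 1) / \<delta>"
  have "T > 1"
    using \<open>\<delta> > 0\<close> by (simp add: T_def add_pos_nonneg)
  then obtain z' where "1 < z'" "h T - h 1 = (T - 1) * h' z'"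
    using MVT2[of 1 T h h'] h by auto
  moreover have "(T - 1) * h' z' \<le> (T - 1) * - \<delta>"
    using h'_le[of z'] \<open>1 < z'\<close> \<open>T > 1\<close> by (intro mult_left_mono) auto
  moreover have "(T - 1) * - \<delta> = - (max 0 (h 1 - c) + 1)"
    using \<open>\<delta> > 0\<close> by (simp add: T_def)
  ultimately have "h T < c"
    by linarith
  with \<open>T > 1\<close> show ?thesis
    by (intro exI[of _ T]) simp
qed

lemma mat_cos_diagonal_has_positive_zero:
  fixes A :: "real^'n::finite^'n"
  assumes sym: "transpose A = A" and y: "A *v y = axis u 1"
  shows "\<exists>t>0. mat_cos A t $ u $ u = 0"
proof (rule ccontr)
  assume no_zero: "\<not> (\<exists>t>0. mat_cos A t $ u $ u = 0)"
  define e :: "real^'n" where "e = axis u 1"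
  define f where "f t = mat_cos A t $ u $ u" for t
  define h where "h t = y \<bullet> (mat_cos A t *v y)" for t
  define h' where "h' t = - (e \<bullet> (mat_sin A t *v y))" for t
  have f_pos: "f t > 0" if "t > 0" for t
  proof (rule ccontr)
    assume "\<not> f t > 0"
    moreover have "isCont f s" for s
      unfolding f_def by (rule DERIV_isCont[OF mat_cos_entry_has_derivative])
    moreover have "f 0 = 1"
      by (simp add: f_def mat_cos_at_0 mat_def)
    ultimately obtain s where "0 \<le> s" "s \<le> t" "f s = 0"
      using IVT2[of f t 0 0] \<open>t > 0\<close> by force
    with no_zero \<open>f 0 = 1\<close> show False
      by (cases "s = 0") (auto simp: f_def)
  qed
  have "(h has_real_derivative h' t) (at t)" for t
  proof -
    have "(h has_real_derivative 0 \<bullet> (mat_cos A t *v y) + y \<bullet> - (A *v (mat_sin A t *v y))) (at t)"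
      unfolding h_def
      by (intro has_real_derivative_inner_vec mat_cos_vector_has_derivative) simp
    then show ?thesis
      by (simp add: h'_def e_def symmetric_matrix_inner_commute[OF sym, symmetric] y)
  qed
  moreover have "(h' has_real_derivative - f t) (at t)" for t
  proof -
    have "(h' has_real_derivative - (0 \<bullet> (mat_sin A t *v y) + e \<bullet> (A *v (mat_cos A t *v y)))) (at t)"
      unfolding h'_def
      by (intro DERIV_minus has_real_derivative_inner_vec mat_sin_vector_has_derivative) simp
    moreover have "A *v (mat_cos A t *v y) = mat_cos A t *v e"
      using matpow_series_commute[OF abs_cos_coeff_le, of A t]
      by (simp add: matrix_vector_mul_assoc e_def y[symmetric])
    ultimately show ?thesis
      by (simp add: f_def e_def inner_axis' matrix_vector_mul_component inner_axis)
  qed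
  moreover have "h' 0 \<le> 0"
    by (simp add: h'_def mat_sin_at_0)
  ultimately obtain t where "h t < - (norm y ^ 2)"
    using negative_second_derivative_unbounded_below f_pos by blast
  moreover have "\<bar>h t\<bar> \<le> norm y ^ 2"
    unfolding h_def power2_eq_square
    using Cauchy_Schwarz_ineq2[of y "mat_cos A t *v y"] norm_mat_cos_vector_le[OF sym, of t y]
    by (meson mult_left_mono norm_ge_zero order_trans)
  ultimately show False
    by linarith
qed

theorem theorem12:
  fixes w :: "'n::finite \<Rightarrow> 'n \<Rightarrow> real" and u :: 'n
  assumes "weighted_graph w"
    and "wg_connected w"
    and "wg_bipartite w"
    and "0 \<notin> eig_support (adj_matrix w) u"
  shows "(INF t\<in>{0<..}. cmod (transition (adj_matrix w) t $ u $ u)) = 0"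
proof -
  define A where "A = adj_matrix w"
  have sym: "transpose A = A"
    using assms(1) by (simp add: A_def adj_matrix_def transpose_def weighted_graph_def vec_eq_iff)
  obtain S where S: "\<And>x y. A $ x $ y \<noteq> 0 \<Longrightarrow> (x \<in> S \<longleftrightarrow> y \<notin> S)"
    using assms(3) by (auto simp: wg_bipartite_def A_def adj_matrix_def)
  have "closest_point {v. A *v v = 0} (axis u 1) = 0"
    using assms(4) by (simp add: eig_support_def eig_proj_def eigenspace_def A_def)
  then obtain y where "A *v y = axis u 1"
    using in_range_if_closest_point_kernel_eq_0[OF sym] by blast
  then obtain t0 where "t0 > 0" "mat_cos A t0 $ u $ u = 0"
    using mat_cos_diagonal_has_positive_zero[OF sym] by blast
  then have "cmod (transition A t0 $ u $ u) = 0"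
    by (simp add: transition_diagonal_of_bipartite[OF S])
  moreover have "bdd_below ((\<lambda>t. cmod (transition A t $ u $ u)) ` {0<..})"
    by (rule bdd_belowI2[where m = 0]) simp
  ultimately have "(INF t\<in>{0<..}. cmod (transition A t $ u $ u)) \<le> 0"
    using \<open>t0 > 0\<close> by (metis cINF_lower greaterThan_iff)
  moreover have "(INF t\<in>{0<..}. cmod (transition A t $ u $ u)) \<ge> 0"
    by (rule cINF_greatest) auto
  ultimately show ?thesis
    by (simp add: A_def)
qed

end
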